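(* Let $\alpha,\beta,\delta\in(0,1)$, $m=\alpha n^\beta$, $\lambda^*=\frac{\log_2(1+\delta)}{1-\beta}$, $\lambda<\lambda^*$, and $k>0$. Then $$\lim_{n\to\infty}\sum_{1\le w\le\lambda m/\log_2 n}\binom{n}{w}\frac{1}{2^m}\left(1+\left(1-2\frac{k(\log_2 m)^2}{m}\right)^w\right)^m=0.$$ *)

theory Defs
  imports Complex_Main
begin

end

theory Submission
  imports Defs "HOL-Real_Asymp.Real_Asymp"
begin

text \<open>
  Each summand is at most 1/n^2 for large n, and there are at most n of them. Put
  eps = 2k (log2 m)^2 / m, so that (1 - eps)^w <= exp (-eps w), and split the range of w.
  If eps w <= 1, the factor ((1 + (1 - eps)^w) / 2)^m is at most exp (-m eps w / 4), which
  is n^(-Theta (w log n)) and beats (n choose w) <= n^w. If 1 <= eps w <= T for a suitable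
  constant T, that factor is at most exp (-m / 4), whereas
  (n choose w) <= (e n / w)^w <= (e n eps)^(T / eps) is only exp (O (m / log m)).
  If eps w > T, the factor is at most ((1 + exp (-T)) / 2)^m, essentially 2^(-m), while
  (n choose w) <= (e n eps)^w is about n^((1 - beta) w) <= 2^(lam (1 - beta) m); this is
  where lam (1 - beta) < log2 (1 + delta) < 1 is needed; the hypothesis alpha < 1 is not.
\<close>

definition weight_term :: "nat \<Rightarrow> real \<Rightarrow> real \<Rightarrow> nat \<Rightarrow> real" where
  "weight_term n m \<epsilon> w = real (n choose w) * (1 / 2 powr m) * (1 + (1 - \<epsilon>) ^ w) powr m"

lemma power_div_fact_le_exp:
  fixes x :: real
  assumes "0 \<le> x"
  shows "x ^ k / fact k \<le> exp x"
proof -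
  have "x ^ k / fact k = (\<Sum>n\<in>{k}. x ^ n /\<^sub>R fact n)"
    by (simp add: divide_inverse mult.commute)
  also have "\<dots> \<le> (\<Sum>n. x ^ n /\<^sub>R fact n)"
    using summable_exp[of x] assms by (intro sum_le_suminf) auto
  also have "\<dots> = exp x"
    using exp_converges[of x] by (simp add: sums_unique[symmetric])
  finally show ?thesis .
qed

lemma binomial_le_exp_entropy:
  assumes "1 \<le> k" "1 \<le> n"
  shows "real (n choose k) \<le> exp (real k * (1 + ln (real n) - ln (real k)))"
proof -
  have "real (n choose k) * fact k \<le> real n ^ k"
    using binomial_fact_pow[of n k] by (metis of_nat_fact of_nat_le_iff of_nat_mult of_nat_power)
  hence "real (n choose k) \<le> real n ^ k / fact k"
    by (simp add: field_simps)
  also have "\<dots> = (real n / real k) ^ k * (real k ^ k / fact k)"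
    using assms by (simp add: power_divide)
  also have "\<dots> \<le> (real n / real k) ^ k * exp (real k)"
    by (intro mult_left_mono power_div_fact_le_exp) auto
  also have "(real n / real k) ^ k = exp (real k * (ln (real n) - ln (real k)))"
    using assms by (simp add: exp_of_nat_mult exp_diff)
  finally show ?thesis
    by (simp add: exp_add[symmetric] algebra_simps)
qed

lemma binomial_le_exp_if_mult_ge_one:
  assumes "1 \<le> n" "0 < \<epsilon>" "1 \<le> \<epsilon> * real w"
  shows "real (n choose w) \<le> exp (real w * (1 + ln (real n) + ln \<epsilon>))"
proof -
  have w: "1 \<le> w"
    using assms by (cases "w = 0") auto
  have "ln (1 / \<epsilon>) \<le> ln (real w)"
    using assms w by (subst ln_le_cancel_iff) (auto simp: field_simps)
  hence "real w * (1 + ln (real n) - ln (real w)) \<le> real w * (1 + ln (real n) + ln \<epsilon>)"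
    using assms by (intro mult_left_mono) (auto simp: ln_div)
  thus ?thesis
    using binomial_le_exp_entropy[OF w assms(1)] by (meson exp_le_cancel_iff order_trans)
qed

lemma one_minus_power_le_exp:
  fixes \<epsilon> :: real
  assumes "\<epsilon> \<le> 1"
  shows "(1 - \<epsilon>) ^ w \<le> exp (- (\<epsilon> * real w))"
proof -
  have "(1 - \<epsilon>) ^ w \<le> exp (- \<epsilon>) ^ w"
    using assms exp_ge_add_one_self[of "- \<epsilon>"] by (intro power_mono) auto
  thus ?thesis
    by (simp add: exp_of_nat_mult[symmetric] mult.commute)
qed

lemma exp_minus_le_one_minus_half:
  fixes x :: real
  assumes "0 \<le> x" "x \<le> 1"
  shows "exp (- x) \<le> 1 - x / 2"
proof -
  have "exp (- x) \<le> 1 / (1 + x)"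
    using exp_ge_add_one_self[of x] assms by (simp add: exp_minus field_simps)
  also have "\<dots> \<le> 1 - x / 2"
    using assms by (simp add: field_simps) (smt (verit) mult_left_le_one_le)
  finally show ?thesis .
qed

lemma ln_one_plus_minus_ln_two_le:
  fixes q :: real
  assumes "0 \<le> q"
  shows "ln (1 + q) - ln 2 \<le> (q - 1) / 2"
proof -
  have "ln (1 + q) - ln 2 = ln ((1 + q) / 2)"
    using assms by (simp add: ln_div)
  also have "\<dots> \<le> (1 + q) / 2 - 1"
    using assms by (intro ln_le_minus_one) auto
  finally show ?thesis by simp
qed

lemma weight_term_le_exp:
  assumes "\<epsilon> \<le> 1" "real (n choose w) \<le> exp B"
    and "B + m * (ln (1 + (1 - \<epsilon>) ^ w) - ln 2) \<le> C"
  shows "weight_term n m \<epsilon> w \<le> exp C"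
proof -
  have "0 \<le> (1 - \<epsilon>) ^ w"
    using assms by simp
  hence "weight_term n m \<epsilon> w = real (n choose w) * exp (m * (ln (1 + (1 - \<epsilon>) ^ w) - ln 2))"
    unfolding weight_term_def by (simp add: powr_def exp_diff right_diff_distrib field_simps)
  also have "\<dots> \<le> exp B * exp (m * (ln (1 + (1 - \<epsilon>) ^ w) - ln 2))"
    using assms by (intro mult_right_mono) auto
  also have "\<dots> \<le> exp C"
    using assms by (simp add: exp_add[symmetric])
  finally show ?thesis .
qed

lemma weight_term_le_small_weight:
  assumes "0 < \<epsilon>" "\<epsilon> * real w \<le> 1" "1 \<le> w" "1 \<le> n" "0 \<le> m"
    and "12 * ln (real n) \<le> m * \<epsilon>"
  shows "weight_term n m \<epsilon> w \<le> exp (- 2 * ln (real n))"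
proof (rule weight_term_le_exp)
  have "\<epsilon> * 1 \<le> \<epsilon> * real w"
    using assms by (intro mult_left_mono) auto
  thus "\<epsilon> \<le> 1"
    using assms by linarith
  show "real (n choose w) \<le> exp (real w * ln (real n))"
    using assms by (cases "w \<le> n") (auto simp: exp_of_nat_mult binomial_le_pow binomial_eq_0)
  have "(1 - \<epsilon>) ^ w \<le> exp (- (\<epsilon> * real w))"
    using \<open>\<epsilon> \<le> 1\<close> by (rule one_minus_power_le_exp)
  also have "\<dots> \<le> 1 - \<epsilon> * real w / 2"
    using assms by (intro exp_minus_le_one_minus_half) auto
  finally have "(1 - \<epsilon>) ^ w \<le> 1 - \<epsilon> * real w / 2" .
  hence "ln (1 + (1 - \<epsilon>) ^ w) - ln 2 \<le> - (\<epsilon> * real w / 4)"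
    using ln_one_plus_minus_ln_two_le[of "(1 - \<epsilon>) ^ w"] \<open>\<epsilon> \<le> 1\<close> by simp
  hence "m * (ln (1 + (1 - \<epsilon>) ^ w) - ln 2) \<le> m * (- (\<epsilon> * real w / 4))"
    using assms by (intro mult_left_mono) auto
  hence "real w * ln (real n) + m * (ln (1 + (1 - \<epsilon>) ^ w) - ln 2)
      \<le> real w * (ln (real n) - m * \<epsilon> / 4)"
    by (simp add: algebra_simps)
  also have "\<dots> \<le> real w * (- 2 * ln (real n))"
    using assms by (intro mult_left_mono) auto
  also have "\<dots> \<le> - 2 * ln (real n)"
    using assms by (simp add: mult_le_cancel_right1)
  finally show "real w * ln (real n) + m * (ln (1 + (1 - \<epsilon>) ^ w) - ln 2) \<le> - 2 * ln (real n)" .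
qed

lemma weight_term_le_medium_weight:
  assumes "0 < \<epsilon>" "\<epsilon> \<le> 1" "1 \<le> \<epsilon> * real w" "\<epsilon> * real w \<le> T" "1 \<le> n" "0 \<le> m"
    and "T * (1 + ln (real n) + ln \<epsilon>) \<le> m * \<epsilon> / 8" "16 * ln (real n) \<le> m"
  shows "weight_term n m \<epsilon> w \<le> exp (- 2 * ln (real n))"
proof (rule weight_term_le_exp[OF \<open>\<epsilon> \<le> 1\<close> binomial_le_exp_if_mult_ge_one])
  define D where "D = 1 + ln (real n) + ln \<epsilon>"
  have binomial_part: "real w * D \<le> m / 8"
  proof (cases "0 \<le> D")
    case True
    have "real w \<le> T / \<epsilon>"
      using assms by (simp add: pos_le_divide_eq mult.commute)
    hence "real w * D \<le> T / \<epsilon> * D"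
      using True by (rule mult_right_mono)
    also have "\<dots> \<le> m / 8"
      using assms by (simp add: D_def pos_divide_le_eq)
    finally show ?thesis .
  next
    case False
    hence "real w * D \<le> 0"
      by (simp add: mult_nonneg_nonpos)
    thus ?thesis
      using assms by simp
  qed
  have "(1 - \<epsilon>) ^ w \<le> exp (- (\<epsilon> * real w))"
    using \<open>\<epsilon> \<le> 1\<close> by (rule one_minus_power_le_exp)
  also have "\<dots> \<le> exp (- 1)"
    using assms by simp
  also have "\<dots> \<le> 1 / 2"
    using exp_ge_add_one_self[of 1] by (simp add: exp_minus field_simps)
  finally have "(1 - \<epsilon>) ^ w \<le> 1 / 2" .
  hence "ln (1 + (1 - \<epsilon>) ^ w) - ln 2 \<le> - 1 / 4"
    using ln_one_plus_minus_ln_two_le[of "(1 - \<epsilon>) ^ w"] \<open>\<epsilon> \<le> 1\<close> by simp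
  hence "m * (ln (1 + (1 - \<epsilon>) ^ w) - ln 2) \<le> - m / 4"
    using assms mult_left_mono[of _ "- 1 / 4" m] by fastforce
  thus "real w * D + m * (ln (1 + (1 - \<epsilon>) ^ w) - ln 2) \<le> - 2 * ln (real n)"
    using binomial_part assms by linarith
qed (use assms in auto)

lemma weight_term_le_large_weight:
  assumes "0 < \<epsilon>" "\<epsilon> \<le> 1" "1 \<le> \<epsilon> * real w" "T \<le> \<epsilon> * real w" "1 < n" "0 \<le> m"
    and "real w \<le> \<Lambda> * m / log 2 (real n)"
    and "0 \<le> \<rho>" "1 + ln (real n) + ln \<epsilon> \<le> \<rho> * ln (real n)"
    and "2 * ln (real n) \<le> m * (ln 2 - exp (- T) - \<Lambda> * ln 2 * \<rho>)"
  shows "weight_term n m \<epsilon> w \<le> exp (- 2 * ln (real n))"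
proof (rule weight_term_le_exp[OF \<open>\<epsilon> \<le> 1\<close> binomial_le_exp_if_mult_ge_one])
  have "0 < ln (real n)"
    using assms by simp
  have "real w * (1 + ln (real n) + ln \<epsilon>) \<le> real w * (\<rho> * ln (real n))"
    using assms by (intro mult_left_mono) auto
  also have "\<dots> \<le> \<Lambda> * m * ln 2 / ln (real n) * (\<rho> * ln (real n))"
    using assms \<open>0 < ln (real n)\<close> by (intro mult_right_mono) (auto simp: log_def)
  also have "\<dots> = m * (\<Lambda> * ln 2 * \<rho>)"
    using \<open>0 < ln (real n)\<close> by simp
  finally have binomial_part: "real w * (1 + ln (real n) + ln \<epsilon>) \<le> m * (\<Lambda> * ln 2 * \<rho>)" .
  have "(1 - \<epsilon>) ^ w \<le> exp (- (\<epsilon> * real w))"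
    using \<open>\<epsilon> \<le> 1\<close> by (rule one_minus_power_le_exp)
  also have "\<dots> \<le> exp (- T)"
    using assms by simp
  finally have "ln (1 + (1 - \<epsilon>) ^ w) - ln 2 \<le> exp (- T) - ln 2"
    using ln_add_one_self_le_self[of "(1 - \<epsilon>) ^ w"] \<open>\<epsilon> \<le> 1\<close> by simp
  hence "m * (ln (1 + (1 - \<epsilon>) ^ w) - ln 2) \<le> m * (exp (- T) - ln 2)"
    using assms by (intro mult_left_mono) auto
  thus "real w * (1 + ln (real n) + ln \<epsilon>) + m * (ln (1 + (1 - \<epsilon>) ^ w) - ln 2)
      \<le> - 2 * ln (real n)"
    using binomial_part assms by (simp add: algebra_simps)
qed (use assms in auto)

lemma weight_term_le_inverse_square:
  assumes "0 < \<epsilon>" "\<epsilon> \<le> 1" "1 < n" "0 \<le> m" "1 \<le> w" "real w \<le> \<Lambda> * m / log 2 (real n)"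
    and "12 * ln (real n) \<le> m * \<epsilon>"
    and "T * (1 + ln (real n) + ln \<epsilon>) \<le> m * \<epsilon> / 8" "16 * ln (real n) \<le> m"
    and "0 \<le> \<rho>" "1 + ln (real n) + ln \<epsilon> \<le> \<rho> * ln (real n)"
    and "2 * ln (real n) \<le> m * (ln 2 - exp (- T) - \<Lambda> * ln 2 * \<rho>)"
  shows "weight_term n m \<epsilon> w \<le> 1 / real n ^ 2"
proof -
  consider "\<epsilon> * real w \<le> 1" | "1 \<le> \<epsilon> * real w" "\<epsilon> * real w \<le> T" | "1 \<le> \<epsilon> * real w" "T \<le> \<epsilon> * real w"
    by linarith
  hence "weight_term n m \<epsilon> w \<le> exp (- 2 * ln (real n))"
  proof cases
    case 1
    show ?thesis
      by (rule weight_term_le_small_weight[OF assms(1) 1 assms(5) less_imp_le[OF assms(3)] assms(4,7)])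
  next
    case 2
    show ?thesis
      by (rule weight_term_le_medium_weight[OF assms(1,2) 2 less_imp_le[OF assms(3)] assms(4,8,9)])
  next
    case 3
    show ?thesis
      by (rule weight_term_le_large_weight[OF assms(1,2) 3 assms(3,4,6,10-12)])
  qed
  also have "exp (- 2 * ln (real n)) = 1 / real n ^ 2"
  proof -
    have "2 * ln (real n) = ln (real n ^ 2)"
      using assms(3) by (simp add: ln_realpow)
    thus ?thesis
      using assms(3) by (simp add: exp_minus divide_inverse)
  qed
  finally show ?thesis .
qed

lemma weight_terms_eventually_le_inverse_square:
  fixes \<alpha> \<beta> k lam :: real
  assumes "0 < \<alpha>" "0 < \<beta>" "\<beta> < 1" "0 < k" "lam * (1 - \<beta>) < 1"
  shows "\<forall>\<^sub>F n in sequentially. \<forall>w. 1 \<le> w \<and> real w \<le> lam * (\<alpha> * real n powr \<beta>) / log 2 (real n) \<longrightarrow>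
           w \<le> n \<and> weight_term n (\<alpha> * real n powr \<beta>)
             (2 * k * (log 2 (\<alpha> * real n powr \<beta>))^2 / (\<alpha> * real n powr \<beta>)) w \<le> 1 / real n ^ 2"
proof -
  \<comment> \<open>enlarging lam keeps \<open>\<Lambda> (1 - \<beta>) < 1\<close> and makes \<open>\<Lambda>\<close> positive\<close>
  define \<Lambda> where "\<Lambda> = max lam (1 / (2 * (1 - \<beta>)))"
  have "0 < \<Lambda>"
    using assms by (simp add: \<Lambda>_def less_max_iff_disj)
  have "\<Lambda> * (1 - \<beta>) < 1"
    using assms by (auto simp: \<Lambda>_def max_def field_simps)
  define g where "g = ln 2 * (1 - \<Lambda> * (1 - \<beta>))"
  define T where "T = ln (3 / g)"
  define \<eta> where "\<eta> = g / (3 * \<Lambda> * ln 2)"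
  have "0 < g" "0 < \<eta>"
    using \<open>0 < \<Lambda>\<close> \<open>\<Lambda> * (1 - \<beta>) < 1\<close> by (auto simp: g_def \<eta>_def)
  have gap: "ln 2 - exp (- T) - \<Lambda> * ln 2 * (1 - \<beta> + \<eta>) = g / 3"
    using \<open>0 < g\<close> \<open>0 < \<Lambda>\<close> by (simp add: T_def \<eta>_def g_def exp_minus field_simps)
  define M where "M n = \<alpha> * real n powr \<beta>" for n :: nat
  define E where "E n = 2 * k * (log 2 (M n))^2 / M n" for n
  note params = assms(1-4) \<open>0 < g\<close> \<open>0 < \<eta>\<close> \<open>0 < \<Lambda>\<close>
  have "\<forall>\<^sub>F n in sequentially. 1 < n"
    by (rule eventually_gt_at_top)
  moreover have "\<forall>\<^sub>F n in sequentially. 0 < E n \<and> E n \<le> 1"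
    unfolding E_def M_def using params by (intro eventually_conj) real_asymp+
  moreover have "\<forall>\<^sub>F n in sequentially. 12 * ln (real n) \<le> M n * E n"
    unfolding E_def M_def using params by real_asymp
  moreover have "\<forall>\<^sub>F n in sequentially. T * (1 + ln (real n) + ln (E n)) \<le> M n * E n / 8"
    unfolding E_def M_def using params by real_asymp
  moreover have "\<forall>\<^sub>F n in sequentially. 16 * ln (real n) \<le> M n"
    unfolding M_def using params by real_asymp
  moreover have "\<forall>\<^sub>F n in sequentially. 1 + ln (real n) + ln (E n) \<le> (1 - \<beta> + \<eta>) * ln (real n)"
    unfolding E_def M_def using params by real_asymp
  moreover have "\<forall>\<^sub>F n in sequentially. 2 * ln (real n) \<le> M n * (g / 3)"
    unfolding M_def using params by real_asymp
  moreover have "\<forall>\<^sub>F n in sequentially. \<Lambda> * M n / log 2 (real n) \<le> real n"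
    unfolding M_def using params by real_asymp
  ultimately show ?thesis
    unfolding M_def[symmetric] E_def[symmetric]
  proof eventually_elim
    case (elim n)
    have "0 < M n"
      using assms elim(1) by (simp add: M_def)
    have margin: "2 * ln (real n) \<le> M n * (ln 2 - exp (- T) - \<Lambda> * ln 2 * (1 - \<beta> + \<eta>))"
      unfolding gap using elim(7) by simp
    show ?case
    proof (intro allI impI conjI)
      fix w assume w: "1 \<le> w \<and> real w \<le> lam * M n / log 2 (real n)"
      have "lam * M n / log 2 (real n) \<le> \<Lambda> * M n / log 2 (real n)"
        using \<open>0 < M n\<close> elim(1) by (intro divide_right_mono mult_right_mono) (auto simp: \<Lambda>_def)
      hence w_le: "real w \<le> \<Lambda> * M n / log 2 (real n)"
        using w by linarith
      thus "w \<le> n"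
        using elim(8) by linarith
      show "weight_term n (M n) (E n) w \<le> 1 / real n ^ 2"
        by (rule weight_term_le_inverse_square[OF _ _ elim(1) _ _ w_le elim(3-5) _ elim(6) margin])
          (use elim(2) w \<open>0 < M n\<close> \<open>0 < \<eta>\<close> \<open>\<beta> < 1\<close> in auto)
    qed
  qed
qed

lemma sum_le_inverse_if_le_inverse_square:
  fixes f :: "nat \<Rightarrow> real"
  assumes "A \<subseteq> {1..n}" "\<And>w. w \<in> A \<Longrightarrow> f w \<le> 1 / real n ^ 2"
  shows "sum f A \<le> 1 / real n"
proof -
  have "finite A"
    using assms(1) finite_subset by blast
  hence "sum f A \<le> real (card A) * (1 / real n ^ 2)"
    using sum_bounded_above[of A f "1 / real n ^ 2"] assms(2) by simp
  also have "\<dots> \<le> real n * (1 / real n ^ 2)"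
    using card_mono[OF _ assms(1)] by (intro mult_right_mono) auto
  also have "\<dots> = 1 / real n"
    by (simp add: power2_eq_square)
  finally show ?thesis .
qed

theorem lemma11:
  fixes \<alpha> \<beta> \<delta> lam k :: real
  assumes "0 < \<alpha>" "\<alpha> < 1" "0 < \<beta>" "\<beta> < 1" "0 < \<delta>" "\<delta> < 1"
    and "lam < log 2 (1 + \<delta>) / (1 - \<beta>)"
    and "0 < k"
  shows "((\<lambda>n::nat. let m = \<alpha> * real n powr \<beta> in
            (\<Sum>w\<in>{w::nat. 1 \<le> w \<and> real w \<le> lam * m / log 2 (real n)}.
               real (n choose w) * (1 / 2 powr m)
               * (1 + (1 - 2 * k * (log 2 m)^2 / m) ^ w) powr m))
          \<longlonglongrightarrow> 0)"
  (is "?f \<longlonglongrightarrow> 0")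
proof (rule tendsto_sandwich[OF _ _ tendsto_const lim_1_over_n])
  have "lam * (1 - \<beta>) < log 2 (1 + \<delta>)"
    using assms by (simp add: less_divide_eq)
  also have "\<dots> < 1"
    using assms by simp
  finally have "lam * (1 - \<beta>) < 1" .
  from weight_terms_eventually_le_inverse_square[OF assms(1,3,4,8) this]
  show "\<forall>\<^sub>F n in sequentially. ?f n \<le> 1 / real n"
    by eventually_elim (auto simp: Let_def weight_term_def intro!: sum_le_inverse_if_le_inverse_square)
  show "\<forall>\<^sub>F n in sequentially. 0 \<le> ?f n"
    unfolding Let_def by (intro always_eventually allI sum_nonneg) auto
qed

end
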